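(* Let $w\in\mathfrak{S}_n$ be Bruhat irreducible and almost reducible at $(J,i)$. Then $s_i$ commutes with every element of $D_L(w)\cap D_R(w)$.
   Context: $\mathfrak{S}_n$ has simple generators $S=\{s_1,\ldots,s_{n-1}\}$, $s_i=(i\ i{+}1)$, length $\ell$. $\supp(x)$ is the set of simple generators in a reduced word of $x$; $D_L(x)=\{s\in S:\ell(sx)<\ell(x)\}$, $D_R(x)=\{s\in S:\ell(xs)<\ell(x)\}$. For $J\subseteq S$, $x=x^Jx_J$ is the parabolic decomposition ($x_J\in W_J=\langle J\rangle$, $x^J$ minimal length in $xW_J$); it is a BP-decomposition if $\supp(x^J)\cap J\subseteq D_L(x_J)$. $w$ is Bruhat irreducible if $\supp(w)=S$ and $w$ is not a product $w'w''$ with $w',w''\ne e$ and $\supp(w')\cap\supp(w'')=\emptyset$. A Bruhat irreducible $w$ is almost reducible at $(J,i)$ if $w=w^Jw_J$ is a BP-decomposition with $\supp(w^J)\cap J=\{s_i\}$ and $s_i\notin D_L(w)\cup D_R(w)$. *)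

theory Defs
  imports "HOL-Combinatorics.Permutations"
begin

text \<open>Products are composition
  (x y = x \<circ> y). Generators are identified with their indices, so subsets
  J of S are subsets of {1..<n}.\<close>

definition sgen :: "nat \<Rightarrow> nat \<Rightarrow> nat" where
  "sgen i = Transposition.transpose i (Suc i)"

definition simple_gens :: "nat \<Rightarrow> nat set" where
  "simple_gens n = {1..<n}"

definition wprod :: "nat list \<Rightarrow> (nat \<Rightarrow> nat)" where
  "wprod ws = foldr (\<lambda>i acc. sgen i \<circ> acc) ws id"

definition len :: "nat \<Rightarrow> (nat \<Rightarrow> nat) \<Rightarrow> nat" where
  "len n w = (LEAST k. \<exists>ws. set ws \<subseteq> simple_gens n \<and> length ws = k \<and> wprod ws = w)"

definition reduced_word :: "nat \<Rightarrow> nat list \<Rightarrow> (nat \<Rightarrow> nat) \<Rightarrow> bool" where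
  "reduced_word n ws w \<longleftrightarrow> set ws \<subseteq> simple_gens n \<and> wprod ws = w \<and> length ws = len n w"

text \<open>Support: generators occurring in a reduced word (independent of the choice).\<close>
definition supp :: "nat \<Rightarrow> (nat \<Rightarrow> nat) \<Rightarrow> nat set" where
  "supp n w = \<Union>{set ws | ws. reduced_word n ws w}"

definition DL :: "nat \<Rightarrow> (nat \<Rightarrow> nat) \<Rightarrow> nat set" where
  "DL n x = {i \<in> simple_gens n. len n (sgen i \<circ> x) < len n x}"

definition DR :: "nat \<Rightarrow> (nat \<Rightarrow> nat) \<Rightarrow> nat set" where
  "DR n x = {i \<in> simple_gens n. len n (x \<circ> sgen i) < len n x}"

definition parabolic :: "nat set \<Rightarrow> (nat \<Rightarrow> nat) set" where
  "parabolic J = {wprod ws | ws. set ws \<subseteq> J}"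

definition parabolic_decomp ::
  "nat \<Rightarrow> nat set \<Rightarrow> (nat \<Rightarrow> nat) \<Rightarrow> (nat \<Rightarrow> nat) \<Rightarrow> (nat \<Rightarrow> nat) \<Rightarrow> bool" where
  "parabolic_decomp n J x u v \<longleftrightarrow>
     v \<in> parabolic J \<and> x = u \<circ> v \<and> (\<forall>y \<in> parabolic J. len n u \<le> len n (x \<circ> y))"

definition BP_decomp ::
  "nat \<Rightarrow> nat set \<Rightarrow> (nat \<Rightarrow> nat) \<Rightarrow> (nat \<Rightarrow> nat) \<Rightarrow> (nat \<Rightarrow> nat) \<Rightarrow> bool" where
  "BP_decomp n J x u v \<longleftrightarrow> parabolic_decomp n J x u v \<and> supp n u \<inter> J \<subseteq> DL n v"

definition bruhat_irreducible :: "nat \<Rightarrow> (nat \<Rightarrow> nat) \<Rightarrow> bool" where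
  "bruhat_irreducible n w \<longleftrightarrow> supp n w = simple_gens n \<and>
     \<not> (\<exists>w1 w2. w1 permutes {1..n} \<and> w2 permutes {1..n} \<and> w1 \<noteq> id \<and> w2 \<noteq> id \<and>
          w = w1 \<circ> w2 \<and> supp n w1 \<inter> supp n w2 = {})"

definition almost_reducible :: "nat \<Rightarrow> (nat \<Rightarrow> nat) \<Rightarrow> nat set \<Rightarrow> nat \<Rightarrow> bool" where
  "almost_reducible n w J i \<longleftrightarrow> bruhat_irreducible n w \<and> J \<subseteq> simple_gens n \<and>
     (\<exists>u v. BP_decomp n J w u v \<and> supp n u \<inter> J = {i}) \<and>
     i \<notin> DL n w \<union> DR n w"

end

theory Submission
  imports Defs
begin

text \<open>Write w = u v with u minimal in w W_J and v in W_J, and compute lengths as inversion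
  counts. A permutation x avoids s_k in its support iff x maps {1..k} onto itself. Hence u
  preserves {1..k} for k in J - {i} but not for k = i, while v preserves {1..k} for k outside J.
  Together with s_i being a left descent of v but not a right descent of w, this puts exactly one
  of s_(i-1), s_(i+1) into J. For the neighbour in J, being a left descent of w contradicts the
  prefix conditions; for the neighbour outside J, being a right descent of w lets one split off a
  permutation of {1..i} or {1..i+1} from w with support disjoint from the rest, contradicting
  Bruhat irreducibility. All other simple generators commute with s_i.\<close>

section \<open>Simple transpositions and words\<close>

lemma sgen_apply: "sgen i x = (if x = i then Suc i else if x = Suc i then i else x)"
  by (simp add: sgen_def Transposition.transpose_def)

lemma sgen_sgen [simp]: "sgen i (sgen i x) = x"
  by (simp add: sgen_apply)

lemma sgen_comp_sgen [simp]: "sgen i \<circ> sgen i = id"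
  by (simp add: sgen_def)

lemma sgen_comp_sgen_comp [simp]: "sgen i \<circ> (sgen i \<circ> f) = f"
  by (simp add: comp_assoc[symmetric])

lemma bij_sgen [simp]: "bij (sgen i)"
  by (simp add: sgen_def)

lemma inv_sgen [simp]: "inv (sgen i) = sgen i"
  by (simp add: sgen_def)

lemma sgen_permutes: "1 \<le> i \<Longrightarrow> i < n \<Longrightarrow> sgen i permutes {1..n}"
  unfolding sgen_def by (rule permutes_swap_id) auto

lemma sgen_commute: "Suc i < j \<or> Suc j < i \<Longrightarrow> sgen i \<circ> sgen j = sgen j \<circ> sgen i"
  by (rule ext) (auto simp: sgen_apply)

lemma wprod_Nil [simp]: "wprod [] = id"
  by (simp add: wprod_def)

lemma wprod_Cons [simp]: "wprod (a # ws) = sgen a \<circ> wprod ws"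
  by (simp add: wprod_def)

lemma wprod_append: "wprod (xs @ ys) = wprod xs \<circ> wprod ys"
  by (induction xs) (simp_all add: comp_assoc)

lemma wprod_permutes: "set ws \<subseteq> {1..<n} \<Longrightarrow> wprod ws permutes {1..n}"
proof (induction ws)
  case (Cons a ws)
  then show ?case
    unfolding wprod_Cons by (intro permutes_compose sgen_permutes) auto
qed (simp add: permutes_id)

lemma wprod_rev_comp: "wprod (rev ws) \<circ> wprod ws = id"
  by (induction ws) (simp_all add: wprod_append comp_assoc)

lemma inv_wprod: "inv (wprod ws) = wprod (rev ws)"
  by (rule inv_unique_comp) (use wprod_rev_comp[of "rev ws"] wprod_rev_comp[of ws] in simp_all)

lemma permutes_fix_0: "(y :: nat \<Rightarrow> nat) permutes {1..n} \<Longrightarrow> y 0 = 0"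
  by (rule permutes_not_in) auto

lemma permutes_le_iff: "(y :: nat \<Rightarrow> nat) permutes {1..n} \<Longrightarrow> y p \<le> n \<longleftrightarrow> p \<le> n"
  using permutes_in_image[OF permutes_subset[of y "{1..n}" "{..n}"]] by auto

section \<open>Length as number of inversions\<close>

definition inversions :: "(nat \<Rightarrow> nat) \<Rightarrow> (nat \<times> nat) set" where
  "inversions f = {(p, q). p < q \<and> f q < f p}"

lemma inversions_id [simp]: "inversions id = {}"
  by (auto simp: inversions_def)

lemma inversions_subset:
  fixes y :: "nat \<Rightarrow> nat"
  assumes y: "y permutes {1..n}"
  shows "inversions y \<subseteq> {1..n} \<times> {1..n}"
proof
  fix x assume "x \<in> inversions y"
  then obtain p q where x: "x = (p, q)" and pq: "p < q" "y q < y p"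
    by (auto simp: inversions_def)
  have "p \<noteq> 0"
    using pq permutes_fix_0[OF y] by (metis not_less0)
  moreover have "q \<le> n"
  proof (rule ccontr)
    assume "\<not> q \<le> n"
    then have "y q = q" "\<not> p \<le> n"
      using pq permutes_not_in[OF y] permutes_le_iff[OF y, of p] by auto
    then show False
      using pq permutes_not_in[OF y, of p] by auto
  qed
  ultimately show "x \<in> {1..n} \<times> {1..n}"
    using x pq by auto
qed

lemma finite_inversions: "y permutes {1..n} \<Longrightarrow> finite (inversions y)"
  using inversions_subset finite_subset by blast

lemma inversions_sgen_comp:
  assumes "bij y" and asc: "inv y a < inv y (Suc a)"
  shows "inversions (sgen a \<circ> y) = insert (inv y a, inv y (Suc a)) (inversions y)"
    and "(inv y a, inv y (Suc a)) \<notin> inversions y"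
proof -
  have y_inv: "y (inv y m) = m" "inv y (y m) = m" for m
    using assms(1) by (simp_all add: bij_is_inj bij_is_surj surj_f_inv_f)
  then have y_eq: "y p = m \<longleftrightarrow> p = inv y m" for p m
    by metis
  show "inversions (sgen a \<circ> y) = insert (inv y a, inv y (Suc a)) (inversions y)"
  proof (rule set_eqI)
    fix x :: "nat \<times> nat"
    obtain p q where x: "x = (p, q)"
      by force
    show "x \<in> inversions (sgen a \<circ> y) \<longleftrightarrow> x \<in> insert (inv y a, inv y (Suc a)) (inversions y)"
      unfolding x inversions_def
      using asc y_eq[of p a] y_eq[of p "Suc a"] y_eq[of q a] y_eq[of q "Suc a"] y_inv
      by (auto simp: sgen_apply split: if_splits)
  qed
  show "(inv y a, inv y (Suc a)) \<notin> inversions y"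
    using y_inv by (simp add: inversions_def)
qed

lemma card_inversions_sgen_comp_ascent:
  assumes "bij y" "finite (inversions y)" "inv y a < inv y (Suc a)"
  shows "card (inversions (sgen a \<circ> y)) = Suc (card (inversions y))"
  using inversions_sgen_comp[OF assms(1,3)] assms(2) by simp

lemma card_inversions_sgen_comp_descent:
  assumes y: "bij y" "finite (inversions y)" and desc: "inv y (Suc a) < inv y a"
  shows "card (inversions y) = Suc (card (inversions (sgen a \<circ> y)))"
proof -
  let ?y' = "sgen a \<circ> y"
  have bij': "bij ?y'"
    using y(1) by (simp add: bij_comp)
  have "inv ?y' = inv y \<circ> sgen a"
    using y(1) by (simp add: o_inv_distrib)
  then have "inv ?y' a < inv ?y' (Suc a)"
    using desc by (simp add: sgen_apply)
  from inversions_sgen_comp[OF bij' this] y(2) show ?thesis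
    by (simp add: comp_assoc[symmetric])
qed

lemma bij_inv_neq_Suc: "bij y \<Longrightarrow> inv y a \<noteq> inv y (Suc a)"
  by (metis bij_inv_eq_iff n_not_Suc_n)

lemma card_inversions_sgen_comp_le:
  assumes "bij y" "finite (inversions y)"
  shows "card (inversions (sgen a \<circ> y)) \<le> Suc (card (inversions y))"
  using card_inversions_sgen_comp_ascent[OF assms, of a] card_inversions_sgen_comp_descent[OF assms, of a]
    bij_inv_neq_Suc[OF assms(1), of a] by (cases "inv y a < inv y (Suc a)") auto

lemma card_inversions_wprod_le: "set ws \<subseteq> {1..<n} \<Longrightarrow> card (inversions (wprod ws)) \<le> length ws"
proof (induction ws)
  case (Cons a ws)
  have "wprod ws permutes {1..n}"
    using Cons.prems by (intro wprod_permutes) auto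
  then have "card (inversions (sgen a \<circ> wprod ws)) \<le> Suc (card (inversions (wprod ws)))"
    by (intro card_inversions_sgen_comp_le permutes_bij finite_inversions)
  moreover have "card (inversions (wprod ws)) \<le> length ws"
    using Cons by simp
  ultimately show ?case
    unfolding wprod_Cons length_Cons by linarith
qed simp

lemma inversions_inv:
  assumes "bij y"
  shows "inversions (inv y) = (\<lambda>(p, q). (y q, y p)) ` inversions y"
proof -
  have y_inv: "y (inv y m) = m" "inv y (y m) = m" for m
    using assms by (simp_all add: bij_is_inj bij_is_surj surj_f_inv_f)
  show ?thesis
  proof (intro set_eqI iffI)
    fix x assume "x \<in> inversions (inv y)"
    then obtain a b where "x = (a, b)" "(inv y b, inv y a) \<in> inversions y"
      using y_inv by (auto simp: inversions_def)
    then show "x \<in> (\<lambda>(p, q). (y q, y p)) ` inversions y"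
      using y_inv by (auto intro: rev_image_eqI)
  next
    fix x assume "x \<in> (\<lambda>(p, q). (y q, y p)) ` inversions y"
    then show "x \<in> inversions (inv y)"
      using y_inv by (auto simp: inversions_def)
  qed
qed

lemma card_inversions_inv:
  assumes "bij y"
  shows "card (inversions (inv y)) = card (inversions y)"
proof -
  have "inj_on (\<lambda>(p, q). (y q, y p)) (inversions y)"
    using bij_is_inj[OF assms] by (intro inj_onI) (auto dest: injD)
  then show ?thesis
    unfolding inversions_inv[OF assms] by (rule card_image)
qed

lemma inversions_empty_imp_id:
  assumes "bij y" "inversions y = {}"
  shows "y = id"
proof -
  have "strict_mono f" if "bij f" "inversions f = {}" for f :: "nat \<Rightarrow> nat"
  proof (rule strict_monoI)
    fix p q :: nat assume "p < q"
    then have "f p \<noteq> f q" "\<not> f q < f p"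
      using that bij_is_inj[OF that(1)] by (auto simp: inversions_def inj_eq)
    then show "f p < f q"
      by simp
  qed
  moreover have "bij (inv y)" "inversions (inv y) = {}"
    using assms by (simp_all add: bij_imp_bij_inv inversions_inv)
  ultimately have "m \<le> y m" "m \<le> inv y m" for m
    using assms by (simp_all add: strict_mono_imp_increasing)
  then have "y m = m" for m
    by (metis assms(1) bij_inv_eq_iff le_antisym)
  then show ?thesis
    by auto
qed

lemma adjacent_inversion:
  assumes "inversions f \<noteq> {}"
  shows "\<exists>a. (a, Suc a) \<in> inversions f"
proof -
  obtain x where x: "x \<in> inversions f" and min: "\<And>x'. x' \<in> inversions f \<Longrightarrow> snd x - fst x \<le> snd x' - fst x'"
    using assms ex_has_least_nat[of "\<lambda>x. x \<in> inversions f" _ "\<lambda>x. snd x - fst x"] by blast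
  obtain p q where pq: "x = (p, q)"
    by force
  show ?thesis
  proof (cases "q = Suc p")
    case False
    then have "Suc p < q" "f q < f p"
      using x pq by (auto simp: inversions_def)
    then have "(p, Suc p) \<in> inversions f \<or> (Suc p, q) \<in> inversions f"
      by (auto simp: inversions_def)
    then have False
      using min \<open>Suc p < q\<close> pq by fastforce
    then show ?thesis ..
  qed (use x pq in auto)
qed

lemma ex_word_of_length_card_inversions:
  fixes y :: "nat \<Rightarrow> nat"
  assumes "y permutes {1..n}"
  shows "\<exists>ws. set ws \<subseteq> {1..<n} \<and> length ws = card (inversions y) \<and> wprod ws = y"
  using assms
proof (induction "card (inversions y)" arbitrary: y)
  case 0
  then have "y = id"
    using finite_inversions inversions_empty_imp_id permutes_bij by fastforce
  then show ?case
    using 0 by (intro exI[of _ "[]"]) simp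
next
  case (Suc k)
  have y: "bij y" "finite (inversions y)"
    using Suc.prems by (simp_all add: permutes_bij finite_inversions)
  have "inversions (inv y) \<noteq> {}"
    using Suc.hyps(2) card_inversions_inv[OF y(1)] by force
  then obtain a where a: "(a, Suc a) \<in> inversions (inv y)"
    using adjacent_inversion by blast
  then have a_range: "1 \<le> a" "a < n" and desc: "inv y (Suc a) < inv y a"
    using inversions_subset[OF permutes_inv[OF Suc.prems]] by (auto simp: inversions_def)
  let ?y' = "sgen a \<circ> y"
  have "card (inversions ?y') = k"
    using card_inversions_sgen_comp_descent[OF y desc] Suc.hyps(2) by simp
  moreover have "?y' permutes {1..n}"
    using Suc.prems a_range by (intro permutes_compose sgen_permutes)
  ultimately obtain ws where "set ws \<subseteq> {1..<n}" "length ws = k" "wprod ws = ?y'"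
    using Suc.hyps(1) by blast
  then show ?case
    using a_range Suc.hyps(2) by (intro exI[of _ "a # ws"]) auto
qed

lemma len_eq_card_inversions:
  fixes y :: "nat \<Rightarrow> nat"
  assumes "y permutes {1..n}"
  shows "len n y = card (inversions y)"
  unfolding len_def
proof (rule Least_equality)
  show "\<exists>ws. set ws \<subseteq> simple_gens n \<and> length ws = card (inversions y) \<and> wprod ws = y"
    using ex_word_of_length_card_inversions[OF assms] by (simp add: simple_gens_def)
next
  fix k assume "\<exists>ws. set ws \<subseteq> simple_gens n \<and> length ws = k \<and> wprod ws = y"
  then show "card (inversions y) \<le> k"
    using card_inversions_wprod_le by (auto simp: simple_gens_def)
qed

lemma len_inv:
  fixes y :: "nat \<Rightarrow> nat"
  assumes "y permutes {1..n}"
  shows "len n (inv y) = len n y"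
  using assms by (simp add: len_eq_card_inversions permutes_inv card_inversions_inv permutes_bij)

lemma DL_iff:
  fixes y :: "nat \<Rightarrow> nat"
  assumes y: "y permutes {1..n}"
  shows "k \<in> DL n y \<longleftrightarrow> k \<in> {1..<n} \<and> inv y (Suc k) < inv y k"
proof (cases "k \<in> {1..<n}")
  case True
  have fin: "bij y" "finite (inversions y)"
    using y by (simp_all add: permutes_bij finite_inversions)
  have "sgen k \<circ> y permutes {1..n}"
    using True y by (intro permutes_compose sgen_permutes) auto
  then have len: "len n (sgen k \<circ> y) = card (inversions (sgen k \<circ> y))" "len n y = card (inversions y)"
    using y by (simp_all add: len_eq_card_inversions)
  have "len n (sgen k \<circ> y) < len n y \<longleftrightarrow> inv y (Suc k) < inv y k"
  proof (cases "inv y k < inv y (Suc k)")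
    case True
    then show ?thesis
      using card_inversions_sgen_comp_ascent[OF fin True] len by simp
  next
    case False
    then have "inv y (Suc k) < inv y k"
      using bij_inv_neq_Suc[OF fin(1), of k] by linarith
    then show ?thesis
      using card_inversions_sgen_comp_descent[OF fin] len by simp
  qed
  then show ?thesis
    using True by (simp add: DL_def simple_gens_def)
qed (auto simp: DL_def simple_gens_def)

lemma DR_iff:
  fixes y :: "nat \<Rightarrow> nat"
  assumes y: "y permutes {1..n}"
  shows "k \<in> DR n y \<longleftrightarrow> k \<in> {1..<n} \<and> y (Suc k) < y k"
proof -
  have "k \<in> DR n y \<longleftrightarrow> k \<in> DL n (inv y)"
  proof (cases "k \<in> {1..<n}")
    case True
    then have yk: "y \<circ> sgen k permutes {1..n}"
      using y by (intro permutes_compose sgen_permutes) auto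
    have "inv (y \<circ> sgen k) = sgen k \<circ> inv y"
      using y by (simp add: o_inv_distrib permutes_bij)
    then have "len n (sgen k \<circ> inv y) = len n (y \<circ> sgen k)"
      using len_inv[OF yk] by simp
    then show ?thesis
      using True len_inv[OF y] by (simp add: DL_def DR_def)
  qed (auto simp: DL_def DR_def simple_gens_def)
  moreover have "inv (inv y) = y"
    using y by (simp add: inv_inv_eq permutes_bij)
  ultimately show ?thesis
    using DL_iff[OF permutes_inv[OF y], of k] by simp
qed

section \<open>Support and prefix stability\<close>

lemma permutes_atMost_image: "(y :: nat \<Rightarrow> nat) permutes {1..n} \<Longrightarrow> n \<le> k \<Longrightarrow> y ` {..k} = {..k}"
  by (rule permutes_image, rule permutes_subset) auto

text \<open>By supp_eq below, a permutation is prefix-stable at k iff s_k is not in its support.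
  Permutations of {1..n} fix 0, so the prefix {..k} serves in place of {1..k} and spares
  positivity side conditions.\<close>

definition prefix_stable :: "(nat \<Rightarrow> nat) \<Rightarrow> nat \<Rightarrow> bool" where
  "prefix_stable f k \<longleftrightarrow> f ` {..k} = {..k}"

lemma prefix_stable_le_iff: "inj f \<Longrightarrow> prefix_stable f k \<Longrightarrow> f m \<le> k \<longleftrightarrow> m \<le> k"
  unfolding prefix_stable_def by (metis atMost_iff inj_image_mem_iff)

lemma prefix_stable_comp: "prefix_stable f k \<Longrightarrow> prefix_stable g k \<Longrightarrow> prefix_stable (f \<circ> g) k"
  unfolding prefix_stable_def image_comp[symmetric] by simp

lemma prefix_stable_sgen: "m \<noteq> k \<Longrightarrow> prefix_stable (sgen m) k"
  unfolding prefix_stable_def sgen_def by (rule transpose_image_eq) auto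

lemma prefix_stable_wprod: "k \<notin> set ws \<Longrightarrow> prefix_stable (wprod ws) k"
  by (induction ws) (auto simp: prefix_stable_def[of id] intro: prefix_stable_comp prefix_stable_sgen)

lemma prefix_stable_inv: "bij f \<Longrightarrow> prefix_stable (inv f) k \<longleftrightarrow> prefix_stable f k"
  unfolding prefix_stable_def
  by (metis bij_imp_bij_inv bij_is_inj image_inv_f_f inv_inv_eq)

lemma prefix_stable_SucI: "prefix_stable f k \<Longrightarrow> f (Suc k) = Suc k \<Longrightarrow> prefix_stable f (Suc k)"
  by (simp add: prefix_stable_def atMost_Suc)

lemma prefix_stable_SucD:
  assumes "inj f" "prefix_stable f (Suc k)" "f (Suc k) = Suc k"
  shows "prefix_stable f k"
proof -
  have "{..k} = {..Suc k} - {Suc k}"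
    by auto
  then have "f ` {..k} = f ` {..Suc k} - f ` {Suc k}"
    using assms(1) by (metis image_set_diff)
  then show ?thesis
    using assms(2,3) unfolding prefix_stable_def by auto
qed

lemma crossing_inversion_not_prefix_stable:
  assumes "inj f" "(p, q) \<in> inversions f" "p \<le> k" "k < q"
  shows "\<not> prefix_stable f k"
  using assms prefix_stable_le_iff[OF assms(1), of k p] prefix_stable_le_iff[OF assms(1), of k q]
  by (auto simp: inversions_def)

lemma reduced_word_crossing_inversion:
  assumes "set ws \<subseteq> {1..<n}" "card (inversions (wprod ws)) = length ws" "k \<in> set ws"
  shows "\<exists>p q. (p, q) \<in> inversions (wprod ws) \<and> p \<le> k \<and> k < q"
  using assms
proof (induction ws)
  case (Cons a ws)
  let ?y = "wprod ws"
  have y: "bij ?y" "finite (inversions ?y)"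
    using Cons.prems(1) wprod_permutes[of ws n] by (auto simp: permutes_bij finite_inversions)
  have asc: "inv ?y a < inv ?y (Suc a)"
  proof (rule ccontr)
    assume "\<not> ?thesis"
    then have "inv ?y (Suc a) < inv ?y a"
      using bij_inv_neq_Suc[OF y(1), of a] by linarith
    then have "card (inversions (wprod (a # ws))) < card (inversions ?y)"
      using card_inversions_sgen_comp_descent[OF y] by simp
    moreover have "card (inversions ?y) \<le> length ws"
      using Cons.prems(1) card_inversions_wprod_le[of ws n] by simp
    ultimately show False
      using Cons.prems(2) unfolding length_Cons by linarith
  qed
  note step = inversions_sgen_comp[OF y(1) asc, folded wprod_Cons]
  show ?case
  proof (cases "k \<in> set ws")
    case True
    moreover have "card (inversions ?y) = length ws"
      using Cons.prems(2) card_inversions_sgen_comp_ascent[OF y asc]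
      unfolding wprod_Cons length_Cons by linarith
    ultimately obtain p q where "(p, q) \<in> inversions ?y" "p \<le> k" "k < q"
      using Cons.IH Cons.prems(1) by auto
    then show ?thesis
      using step(1) by blast
  next
    case False
    then have "k = a" and stable: "prefix_stable ?y k"
      using Cons.prems(3) prefix_stable_wprod by auto
    have "?y (inv ?y m) = m" for m
      using y(1) by (simp add: bij_is_surj surj_f_inv_f)
    then have "inv ?y a \<le> k" "\<not> inv ?y (Suc a) \<le> k"
      using prefix_stable_le_iff[OF bij_is_inj[OF y(1)] stable, of "inv ?y a"]
        prefix_stable_le_iff[OF bij_is_inj[OF y(1)] stable, of "inv ?y (Suc a)"] \<open>k = a\<close>
      by auto
    with step(1) \<open>k = a\<close> show ?thesis
      by (metis insertI1 not_le)
  qed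
qed simp

lemma supp_eq:
  fixes x :: "nat \<Rightarrow> nat"
  assumes x: "x permutes {1..n}"
  shows "supp n x = {k \<in> {1..<n}. \<not> prefix_stable x k}"
proof (intro set_eqI iffI)
  fix k assume "k \<in> supp n x"
  then obtain ws where ws: "reduced_word n ws x" "k \<in> set ws"
    unfolding supp_def by auto
  then have "set ws \<subseteq> {1..<n}" "wprod ws = x" "card (inversions (wprod ws)) = length ws"
    using len_eq_card_inversions[OF x] by (auto simp: reduced_word_def simple_gens_def)
  with ws(2) show "k \<in> {k \<in> {1..<n}. \<not> prefix_stable x k}"
    using reduced_word_crossing_inversion crossing_inversion_not_prefix_stable
      permutes_inj[OF x] by blast
next
  fix k assume k: "k \<in> {k \<in> {1..<n}. \<not> prefix_stable x k}"
  obtain ws where ws: "set ws \<subseteq> {1..<n}" "length ws = card (inversions x)" "wprod ws = x"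
    using ex_word_of_length_card_inversions[OF x] by blast
  then have "reduced_word n ws x"
    using len_eq_card_inversions[OF x] by (auto simp: reduced_word_def simple_gens_def)
  moreover have "k \<in> set ws"
    using prefix_stable_wprod[of k ws] ws(3) k by auto
  ultimately show "k \<in> supp n x"
    unfolding supp_def by blast
qed

lemma supp_inv: "(x :: nat \<Rightarrow> nat) permutes {1..n} \<Longrightarrow> supp n (inv x) = supp n x"
  by (simp add: supp_eq permutes_inv prefix_stable_inv permutes_bij)

section \<open>Bruhat reducibility from the one-line notation\<close>

lemma bruhat_irreducible_inv:
  fixes x :: "nat \<Rightarrow> nat"
  assumes x: "x permutes {1..n}" and irr: "bruhat_irreducible n x"
  shows "bruhat_irreducible n (inv x)"
  unfolding bruhat_irreducible_def
proof (intro conjI notI)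
  show "supp n (inv x) = simple_gens n"
    using irr supp_inv[OF x] by (simp add: bruhat_irreducible_def)
next
  assume "\<exists>x1 x2. x1 permutes {1..n} \<and> x2 permutes {1..n} \<and> x1 \<noteq> id \<and> x2 \<noteq> id \<and>
            inv x = x1 \<circ> x2 \<and> supp n x1 \<inter> supp n x2 = {}"
  then obtain x1 x2 where x12: "x1 permutes {1..n}" "x2 permutes {1..n}" "x1 \<noteq> id" "x2 \<noteq> id"
    "inv x = x1 \<circ> x2" "supp n x1 \<inter> supp n x2 = {}"
    by blast
  have "x = inv x2 \<circ> inv x1"
    using x12(5) x x12(1,2) by (metis inv_inv_eq o_inv_distrib permutes_bij)
  moreover have "inv x2 \<noteq> id" "inv x1 \<noteq> id"
    using x12(1-4) by (metis inv_id inv_inv_eq permutes_bij)+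
  moreover have "supp n (inv x2) \<inter> supp n (inv x1) = {}"
    using x12(6) supp_inv[OF x12(1)] supp_inv[OF x12(2)] by auto
  moreover have "inv x2 permutes {1..n}" "inv x1 permutes {1..n}"
    using x12(1,2) by (simp_all add: permutes_inv)
  ultimately show False
    using irr unfolding bruhat_irreducible_def by blast
qed

text \<open>The factor is obtained by truncating the values of x at i on the positions up to i; the
  hypothesis leaves room for only one position up to i whose value is at least i.\<close>

lemma ex_prefix_factor:
  fixes x :: "nat \<Rightarrow> nat"
  assumes x: "x permutes {1..n}" and small: "\<And>p. x p < i \<Longrightarrow> p \<le> i"
  shows "\<exists>x2. x2 permutes {1..i} \<and> (\<forall>m<i. x (inv x2 m) = m)"
proof -
  define x2 where "x2 p = (if p \<le> i then min (x p) i else p)" for p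
  have x_inv: "x (inv x m) = m" for m
    using permutes_inverses(1)[OF x] .
  have inj: "inj_on x2 {..i}"
  proof (rule inj_onI, rule ccontr)
    fix p p' assume p: "p \<in> {..i}" "p' \<in> {..i}" "x2 p = x2 p'" "p \<noteq> p'"
    then have "x p \<noteq> x p'"
      using permutes_inj[OF x] by (auto dest: injD)
    with p have big: "i \<le> x p" "i \<le> x p'"
      by (auto simp: x2_def min_def split: if_splits)
    have "inv x ` {..<i} \<subseteq> {..i} - {p, p'}"
      using small x_inv big by (fastforce simp: not_le)
    then have "card (inv x ` {..<i}) \<le> card ({..i} - {p, p'})"
      by (intro card_mono) auto
    moreover have "card (inv x ` {..<i}) = i"
      using bij_is_inj[OF bij_imp_bij_inv[OF permutes_bij[OF x]]]
      by (simp add: card_image inj_on_subset)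
    moreover have "card ({..i} - {p, p'}) = i - 1"
      using p by (simp add: card_Diff_subset)
    ultimately show False
      using p by (cases i) auto
  qed
  have "x2 ` {..i} = {..i}"
    by (rule endo_inj_surj[OF _ _ inj]) (auto simp: x2_def)
  then have "x2 permutes {..i}"
    using inj by (intro bij_imp_permutes) (auto simp: bij_betw_def x2_def)
  moreover have "x2 0 = 0"
    using permutes_fix_0[OF x] by (simp add: x2_def)
  ultimately have x2: "x2 permutes {1..i}"
    by (auto simp: permutes_def not_less_eq_eq)
  have "x (inv x2 m) = m" if "m < i" for m
  proof -
    have "x2 (inv x2 m) = m"
      using permutes_inverses(1)[OF x2] .
    with that show ?thesis
      by (auto simp: x2_def split: if_splits)
  qed
  with x2 show ?thesis
    by blast
qed

lemma not_bruhat_irreducible_if_small_values_in_prefix: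
  fixes x :: "nat \<Rightarrow> nat"
  assumes x: "x permutes {1..n}" and i: "2 \<le> i" "i < n"
    and small: "\<And>p. x p < i \<Longrightarrow> p \<le> i"
  shows "\<not> bruhat_irreducible n x"
proof
  assume irr: "bruhat_irreducible n x"
  obtain x2 where x2: "x2 permutes {1..i}" and fix1: "\<And>m. m < i \<Longrightarrow> x (inv x2 m) = m"
    using ex_prefix_factor[OF x small] by blast
  have x2n: "x2 permutes {1..n}"
    using x2 i by (auto intro: permutes_subset)
  define x1 where "x1 = x \<circ> inv x2"
  have x1: "x1 permutes {1..n}"
    unfolding x1_def using x permutes_inv[OF x2n] by (rule permutes_compose[rotated])
  have x_eq: "x = x1 \<circ> x2"
    unfolding x1_def using permutes_inv_o(2)[OF x2n] by (simp add: comp_assoc)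
  have "prefix_stable x1 k" if "k < i" for k
    using that fix1 by (force simp: prefix_stable_def x1_def)
  then have supp1: "supp n x1 \<subseteq> {i..}"
    using supp_eq[OF x1] by (auto simp: not_less[symmetric])
  have "prefix_stable x2 k" if "i \<le> k" for k
    using permutes_atMost_image[OF x2 that] by (simp add: prefix_stable_def)
  then have supp2: "supp n x2 \<subseteq> {..<i}"
    using supp_eq[OF x2n] by (auto simp: not_le[symmetric])
  have "1 \<in> supp n x" "i \<in> supp n x"
    using irr i by (simp_all add: bruhat_irreducible_def simple_gens_def)
  then have "x1 \<noteq> id" "x2 \<noteq> id"
    using x_eq supp1 supp2 i by auto
  moreover have "supp n x1 \<inter> supp n x2 = {}"
    using supp1 supp2 by fastforce
  ultimately show False
    using irr x1 x2n x_eq by (auto simp: bruhat_irreducible_def)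
qed

lemma not_bruhat_irreducible_if_prefix_values_small:
  fixes x :: "nat \<Rightarrow> nat"
  assumes x: "x permutes {1..n}" and i: "1 \<le> i" "Suc i < n"
    and small: "\<And>p. p \<le> i \<Longrightarrow> x p \<le> Suc i"
  shows "\<not> bruhat_irreducible n x"
proof
  assume "bruhat_irreducible n x"
  moreover have "\<not> bruhat_irreducible n (inv x)"
  proof (rule not_bruhat_irreducible_if_small_values_in_prefix[OF permutes_inv[OF x]])
    fix p assume "inv x p < Suc i"
    then show "p \<le> Suc i"
      using small[of "inv x p"] permutes_inverses(1)[OF x] by simp
  qed (use i in auto)
  ultimately show False
    using bruhat_irreducible_inv[OF x] by blast
qed

section \<open>Parabolic decompositions\<close>

lemma parabolic_permutes:
  assumes "J \<subseteq> simple_gens n" "v \<in> parabolic J"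
  shows "v permutes {1..n}"
proof -
  obtain ws where "set ws \<subseteq> J" "v = wprod ws"
    using assms(2) by (auto simp: parabolic_def)
  with assms(1) show ?thesis
    using wprod_permutes[of ws n] by (auto simp: simple_gens_def)
qed

lemma inv_parabolic:
  assumes "v \<in> parabolic J"
  shows "inv v \<in> parabolic J"
proof -
  obtain ws where "set ws \<subseteq> J" "v = wprod ws"
    using assms by (auto simp: parabolic_def)
  then have "set (rev ws) \<subseteq> J" "inv v = wprod (rev ws)"
    by (simp_all add: inv_wprod)
  then show ?thesis
    unfolding parabolic_def by blast
qed

lemma parabolic_comp_sgen:
  assumes "v \<in> parabolic J" "k \<in> J"
  shows "v \<circ> sgen k \<in> parabolic J"
proof -
  obtain ws where "set ws \<subseteq> J" "v = wprod ws"
    using assms(1) by (auto simp: parabolic_def)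
  then have "set (ws @ [k]) \<subseteq> J" "v \<circ> sgen k = wprod (ws @ [k])"
    using assms(2) by (simp_all add: wprod_append)
  then show ?thesis
    unfolding parabolic_def by blast
qed

lemma parabolic_prefix_stable: "v \<in> parabolic J \<Longrightarrow> k \<notin> J \<Longrightarrow> prefix_stable v k"
  by (auto simp: parabolic_def intro: prefix_stable_wprod)

lemma parabolic_decomp_permutes:
  fixes w :: "nat \<Rightarrow> nat"
  assumes "w permutes {1..n}" "J \<subseteq> simple_gens n" "parabolic_decomp n J w u v"
  shows "u permutes {1..n}" "v permutes {1..n}"
proof -
  show v: "v permutes {1..n}"
    using assms(2,3) unfolding parabolic_decomp_def by (blast intro: parabolic_permutes)
  have "u = w \<circ> inv v"
    using assms(3) permutes_inv_o(1)[OF v] by (simp add: parabolic_decomp_def comp_assoc)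
  then show "u permutes {1..n}"
    using assms(1) permutes_inv[OF v] by (simp add: permutes_compose)
qed

text \<open>Minimality of u in its coset w W_J: u s_k lies in the same coset for every k in J.\<close>

lemma parabolic_decomp_ascent:
  fixes w :: "nat \<Rightarrow> nat"
  assumes w: "w permutes {1..n}" and J: "J \<subseteq> simple_gens n"
    and d: "parabolic_decomp n J w u v" and k: "k \<in> J"
  shows "u k < u (Suc k)"
proof -
  note uv = parabolic_decomp_permutes[OF w J d]
  have v: "v \<in> parabolic J" and w_eq: "w = u \<circ> v"
    and min: "\<forall>y \<in> parabolic J. len n u \<le> len n (w \<circ> y)"
    using d by (auto simp: parabolic_decomp_def)
  have "inv v \<circ> sgen k \<in> parabolic J"
    using v k by (intro parabolic_comp_sgen inv_parabolic)
  moreover have "w \<circ> (inv v \<circ> sgen k) = u \<circ> sgen k"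
    using w_eq permutes_inv_o(1)[OF uv(2)] by (metis comp_assoc comp_id)
  ultimately have "len n u \<le> len n (u \<circ> sgen k)"
    using min by metis
  then have "\<not> u (Suc k) < u k"
    using DR_iff[OF uv(1), of k] k J by (auto simp: DR_def simple_gens_def)
  moreover have "u k \<noteq> u (Suc k)"
    using permutes_inj[OF uv(1)] by (metis injD n_not_Suc_n)
  ultimately show ?thesis
    by simp
qed

section \<open>Almost reducible permutations\<close>

locale almost_reducible_decomposition =
  fixes n :: nat and w u v :: "nat \<Rightarrow> nat" and J :: "nat set" and i :: nat
  assumes w_permutes: "w permutes {1..n}"
    and J_subset: "J \<subseteq> simple_gens n"
    and BP: "BP_decomp n J w u v"
    and supp_u_inter_J: "supp n u \<inter> J = {i}"
    and i_not_DR: "i \<notin> DR n w"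
begin

lemma decomp: "parabolic_decomp n J w u v"
  using BP by (simp add: BP_decomp_def)

lemma u_permutes: "u permutes {1..n}" and v_permutes: "v permutes {1..n}"
  using parabolic_decomp_permutes[OF w_permutes J_subset decomp] by simp_all

lemma w_eq: "w = u \<circ> v"
  using decomp by (simp add: parabolic_decomp_def)

lemma J_range: "k \<in> J \<Longrightarrow> 1 \<le> k \<and> k < n"
  using J_subset by (auto simp: simple_gens_def)

lemma i_in_J: "i \<in> J"
  using supp_u_inter_J by auto

lemma i_range: "1 \<le> i" "i < n"
  using J_range[OF i_in_J] by simp_all

lemma u_ascent: "k \<in> J \<Longrightarrow> u k < u (Suc k)"
  using parabolic_decomp_ascent[OF w_permutes J_subset decomp] .

lemma u_prefix_stable:
  assumes "k \<in> J" "k \<noteq> i"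
  shows "prefix_stable u k"
proof -
  have "k \<notin> supp n u"
    using assms supp_u_inter_J by blast
  then show ?thesis
    using J_range[OF assms(1)] supp_eq[OF u_permutes] by simp
qed

lemma u_not_prefix_stable: "\<not> prefix_stable u i"
proof -
  have "i \<in> supp n u"
    using supp_u_inter_J by blast
  then show ?thesis
    using supp_eq[OF u_permutes] by simp
qed

lemma v_prefix_stable: "k \<notin> J \<Longrightarrow> prefix_stable v k"
  using decomp parabolic_prefix_stable unfolding parabolic_decomp_def by blast

lemma u_le_iff: "prefix_stable u k \<Longrightarrow> u m \<le> k \<longleftrightarrow> m \<le> k"
  using prefix_stable_le_iff[OF permutes_inj[OF u_permutes]] .

lemma v_le_iff: "prefix_stable v k \<Longrightarrow> v m \<le> k \<longleftrightarrow> m \<le> k"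
  using prefix_stable_le_iff[OF permutes_inj[OF v_permutes]] .

lemma w_inv_apply: "u (v (inv w m)) = m"
  using permutes_inverses(1)[OF w_permutes] w_eq by (metis comp_apply)

lemma v_descent: "inv v (Suc i) < inv v i"
proof -
  have "i \<in> DL n v"
    using BP supp_u_inter_J unfolding BP_decomp_def by blast
  then show ?thesis
    using DL_iff[OF v_permutes] by simp
qed

lemma w_ascent: "w i < w (Suc i)"
proof -
  have "w i \<noteq> w (Suc i)"
    using permutes_inj[OF w_permutes] by (metis injD n_not_Suc_n)
  moreover have "\<not> w (Suc i) < w i"
    using i_not_DR DR_iff[OF w_permutes, of i] J_range[OF i_in_J] by simp
  ultimately show ?thesis
    by simp
qed

text \<open>Otherwise u would fix i and hence be prefix-stable at i.\<close>

lemma neighbours_not_both_in_J: "\<not> (i - 1 \<in> J \<and> Suc i \<in> J)"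
proof
  assume "i - 1 \<in> J \<and> Suc i \<in> J"
  then have lower: "i - 1 \<in> J" and upper: "Suc i \<in> J"
    by simp_all
  have i: "2 \<le> i"
    using lower J_range by fastforce
  have "prefix_stable u (i - 1)" "prefix_stable u (Suc i)"
    using lower upper u_prefix_stable i by auto
  then have "\<not> u i \<le> i - 1" "u (Suc i) \<le> Suc i"
    using u_le_iff i by auto
  then have "u i = i"
    using u_ascent[OF i_in_J] by linarith
  then have "prefix_stable u (Suc (i - 1))"
    using prefix_stable_SucI[OF \<open>prefix_stable u (i - 1)\<close>] i by simp
  then show False
    using u_not_prefix_stable i by simp
qed

text \<open>Otherwise v would permute {i, i+1}: fixing both contradicts the descent of v at i,
  swapping them contradicts the ascent of w at i.\<close>

lemma some_neighbour_in_J: "i - 1 \<in> J \<or> Suc i \<in> J"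
proof (rule ccontr)
  assume "\<not> (i - 1 \<in> J \<or> Suc i \<in> J)"
  then have lower_stable: "prefix_stable v (i - 1)" and upper_stable: "prefix_stable v (Suc i)"
    using v_prefix_stable by auto
  have range: "i \<le> v i" "v i \<le> Suc i" "i \<le> v (Suc i)" "v (Suc i) \<le> Suc i"
    using v_le_iff[OF lower_stable, of i] v_le_iff[OF lower_stable, of "Suc i"]
      v_le_iff[OF upper_stable, of i] v_le_iff[OF upper_stable, of "Suc i"] i_range
    by auto
  have "v i \<noteq> v (Suc i)"
    using permutes_inj[OF v_permutes] by (metis injD n_not_Suc_n)
  then consider "v i = i" "v (Suc i) = Suc i" | "v i = Suc i" "v (Suc i) = i"
    using range by linarith
  then show False
  proof cases
    case 1
    then show False
      using v_descent permutes_inverses(2)[OF v_permutes, of i]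
        permutes_inverses(2)[OF v_permutes, of "Suc i"] by simp
  next
    case 2
    then show False
      using w_ascent u_ascent[OF i_in_J] w_eq by simp
  qed
qed

lemma neighbour_in_J_iff: "i - 1 \<in> J \<longleftrightarrow> Suc i \<notin> J"
  using neighbours_not_both_in_J some_neighbour_in_J by blast

lemma upper_neighbour_not_DL:
  assumes upper: "Suc i \<in> J"
  shows "Suc i \<notin> DL n w"
proof -
  have u_stable: "prefix_stable u (Suc i)" and v_stable: "prefix_stable v (i - 1)"
    using upper neighbour_in_J_iff u_prefix_stable v_prefix_stable by auto
  have "u (Suc i) \<noteq> Suc i"
    using prefix_stable_SucD[OF permutes_inj[OF u_permutes] u_stable] u_not_prefix_stable by blast
  then have u_small: "u i < i" "u (Suc i) \<le> i"
    using u_le_iff[OF u_stable, of "Suc i"] u_ascent[OF i_in_J] by auto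
  let ?p = "inv w (Suc i)" and ?q = "inv w (Suc (Suc i))"
  have "v ?p \<le> Suc i" "v ?p \<noteq> Suc i" "v ?p \<noteq> i"
    using u_le_iff[OF u_stable, of "v ?p"] w_inv_apply[of "Suc i"] u_small by auto
  then have "v ?p \<le> i - 1"
    using i_range by linarith
  then have "?p \<le> i - 1"
    using v_le_iff[OF v_stable] by simp
  moreover have "\<not> v ?q \<le> Suc i"
    using u_le_iff[OF u_stable, of "v ?q"] w_inv_apply[of "Suc (Suc i)"] by simp
  then have "\<not> v ?q \<le> i - 1"
    by linarith
  then have "\<not> ?q \<le> i - 1"
    using v_le_iff[OF v_stable, of ?q] by simp
  ultimately show ?thesis
    using DL_iff[OF w_permutes] by simp
qed

lemma lower_neighbour_not_DL:
  assumes lower: "i - 1 \<in> J"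
  shows "i - 1 \<notin> DL n w"
proof -
  have i: "2 \<le> i"
    using lower J_range by fastforce
  have u_stable: "prefix_stable u (i - 1)" and v_stable: "prefix_stable v (Suc i)"
    using lower neighbour_in_J_iff u_prefix_stable v_prefix_stable i by auto
  have "u i \<noteq> i"
    using prefix_stable_SucI[OF u_stable] u_not_prefix_stable i by auto
  then have u_big: "Suc i \<le> u i" "Suc (Suc i) \<le> u (Suc i)"
    using u_le_iff[OF u_stable, of i] u_ascent[OF i_in_J] i by auto
  let ?p = "inv w i" and ?q = "inv w (i - 1)"
  have "\<not> v ?p \<le> i - 1" "v ?p \<noteq> i" "v ?p \<noteq> Suc i"
    using u_le_iff[OF u_stable, of "v ?p"] w_inv_apply[of i] u_big i by auto
  then have "\<not> v ?p \<le> Suc i"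
    by linarith
  then have "\<not> ?p \<le> Suc i"
    using v_le_iff[OF v_stable, of ?p] by simp
  moreover have "v ?q \<le> i - 1"
    using u_le_iff[OF u_stable, of "v ?q"] w_inv_apply[of "i - 1"] by simp
  then have "v ?q \<le> Suc i"
    by linarith
  then have "?q \<le> Suc i"
    using v_le_iff[OF v_stable, of ?q] by simp
  ultimately show ?thesis
    using DL_iff[OF w_permutes, of "i - 1"] i by simp
qed

lemma upper_neighbour_DR_not_irreducible:
  assumes upper: "Suc i \<notin> J" and DR: "Suc i \<in> DR n w"
  shows "\<not> bruhat_irreducible n w"
proof -
  have lower: "i - 1 \<in> J"
    using upper neighbour_in_J_iff by simp
  then have i: "2 \<le> i" "i < n"
    using J_range J_range[OF i_in_J] by fastforce+
  have u_stable: "prefix_stable u (i - 1)" and v_stable: "prefix_stable v (Suc i)"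
    using lower upper u_prefix_stable v_prefix_stable i by auto
  have "\<not> v (Suc (Suc i)) \<le> Suc i"
    using v_le_iff[OF v_stable, of "Suc (Suc i)"] by simp
  then have "\<not> v (Suc (Suc i)) \<le> i - 1"
    by linarith
  then have "\<not> w (Suc (Suc i)) \<le> i - 1"
    using u_le_iff[OF u_stable, of "v (Suc (Suc i))"] w_eq by simp
  moreover have "w (Suc (Suc i)) < w (Suc i)"
    using DR DR_iff[OF w_permutes, of "Suc i"] by simp
  ultimately have big: "i < w (Suc i)"
    by linarith
  have "p \<le> i" if "w p < i" for p
  proof -
    have "u (v p) \<le> i - 1"
      using that w_eq by simp
    then have "v p \<le> i - 1"
      using u_le_iff[OF u_stable] by simp
    then have "v p \<le> Suc i"
      by linarith
    then have "p \<le> Suc i"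
      using v_le_iff[OF v_stable] by simp
    moreover have "p \<noteq> Suc i"
      using that big by auto
    ultimately show ?thesis
      by simp
  qed
  then show ?thesis
    using not_bruhat_irreducible_if_small_values_in_prefix[OF w_permutes i] by blast
qed

lemma lower_neighbour_DR_not_irreducible:
  assumes lower: "i - 1 \<notin> J" and DR: "i - 1 \<in> DR n w"
  shows "\<not> bruhat_irreducible n w"
proof -
  have upper: "Suc i \<in> J"
    using lower neighbour_in_J_iff by simp
  have i: "2 \<le> i" and desc: "w i < w (i - 1)"
    using DR DR_iff[OF w_permutes, of "i - 1"] by auto
  have u_stable: "prefix_stable u (Suc i)" and v_stable: "prefix_stable v (i - 1)"
    using lower upper u_prefix_stable v_prefix_stable by auto
  have small: "w p \<le> Suc i" if "p \<le> i - 1" for p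
  proof -
    have "v p \<le> i - 1"
      using that v_le_iff[OF v_stable] by simp
    then have "v p \<le> Suc i"
      by linarith
    then show ?thesis
      using u_le_iff[OF u_stable] w_eq by simp
  qed
  have "w p \<le> Suc i" if "p \<le> i" for p
  proof (cases "p = i")
    case True
    then show ?thesis
      using small[of "i - 1"] desc by simp
  next
    case False
    then show ?thesis
      using small that by simp
  qed
  moreover have "1 \<le> i" "Suc i < n"
    using i J_range[OF upper] by auto
  ultimately show ?thesis
    using not_bruhat_irreducible_if_prefix_values_small[OF w_permutes] by blast
qed

lemma commutes_with_common_descents:
  assumes irr: "bruhat_irreducible n w" and j: "j \<in> DL n w \<inter> DR n w"
  shows "sgen i \<circ> sgen j = sgen j \<circ> sgen i"
proof -
  have "j \<noteq> i"
    using j i_not_DR by auto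
  moreover have "j \<noteq> Suc i"
    using j irr upper_neighbour_not_DL upper_neighbour_DR_not_irreducible by blast
  moreover have "j \<noteq> i - 1"
    using j irr lower_neighbour_not_DL lower_neighbour_DR_not_irreducible by blast
  moreover have "1 \<le> j"
    using j by (auto simp: DL_def simple_gens_def)
  ultimately show ?thesis
    by (intro sgen_commute) linarith
qed

end

theorem corollary5p5:
  fixes n :: nat and w :: "nat \<Rightarrow> nat" and J :: "nat set" and i :: nat
  assumes "w permutes {1..n}"
    and "bruhat_irreducible n w"
    and "almost_reducible n w J i"
  shows "\<forall>j \<in> DL n w \<inter> DR n w. sgen i \<circ> sgen j = sgen j \<circ> sgen i"
proof -
  obtain u v where "J \<subseteq> simple_gens n" "BP_decomp n J w u v" "supp n u \<inter> J = {i}"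
    "i \<notin> DR n w"
    using assms(3) unfolding almost_reducible_def by blast
  then interpret almost_reducible_decomposition n w u v J i
    using assms(1) by unfold_locales
  show ?thesis
    using commutes_with_common_descents assms(2) by blast
qed

end
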